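(* Assume $K$ is simple, so that $\mathfrak k=\mathfrak k_1$ is simple ($r=1$, $s=0$). Let $T=-T_{\mathfrak p}Q|_{\mathfrak p}+T_1Q|_{\mathfrak k_1}$ with $T_{\mathfrak p},T_1>0$. Then: (1) If $2nT_{\mathfrak p}(2T_1-\kappa_1T_{\mathfrak p})<-d_1T_1^2$, there is no metric $g\in\mathcal M_K$ with $\mathrm{Ric}(g)=cT$ for some $c$. (2) If $2nT_{\mathfrak p}(2T_1-\kappa_1T_{\mathfrak p})=-d_1T_1^2$ or $2T_1-\kappa_1T_{\mathfrak p}\ge0$, there is exactly one pair $(g,c)\in\mathcal M_K\times(0,\infty)$, up to scaling of $g$, with $\mathrm{Ric}(g)=cT$. (3) If $-d_1T_1^2<2nT_{\mathfrak p}(2T_1-\kappa_1T_{\mathfrak p})<0$, there are exactly two pairs $(g,c)\in\mathcal M_K\times(0,\infty)$, up to scaling of $g$, with $\mathrm{Ric}(g)=cT$.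
   Context: Let $G$ be a connected non-compact simple Lie group with Lie algebra $\mathfrak g$, $K$ a maximal compact subgroup with Lie algebra $\mathfrak k=\mathfrak k_1$, $B$ the Killing form of $\mathfrak g$, and $\mathfrak p$ the $B$-orthogonal complement of $\mathfrak k$ in $\mathfrak g$. Let $Q=B|_{\mathfrak p}-B|_{\mathfrak k}$. Let $n=\dim\mathfrak p$, $d_1=\dim\mathfrak k_1$, and define $\kappa_1$ by $B_1=\kappa_1B|_{\mathfrak k_1}$, where $B_1$ is the Killing form of $\mathfrak k_1$. Left-invariant tensor fields on $G$ are identified with bilinear forms on $\mathfrak g$; $Q|_{\mathfrak u}$ denotes $Q$ restricted to $\mathfrak u$ and extended by zero on its $Q$-orthogonal complement. $\mathcal M_K$ is the set of left-invariant metrics on $G$ naturally reductive with respect to $G\times K$ (acting by $(x,k)y=xyk^{-1}$), which by a theorem of Gordon are exactly the metrics $\beta Q|_{\mathfrak p}+\alpha_1Q|_{\mathfrak k_1}$ with $\beta,\alpha_1>0$. *)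

theory Defs
  imports "HOL-Analysis.Analysis"
begin

text \<open>The Lie algebra of G is modelled as a finite-dimensional real vector space
  (a euclidean_space type; its inner product is used only to compute traces, which are
  basis independent) with a bracket br.\<close>

definition lie_algebra :: "('g::euclidean_space \<Rightarrow> 'g \<Rightarrow> 'g) \<Rightarrow> bool" where
  "lie_algebra br \<longleftrightarrow>
     (\<forall>x. linear (br x)) \<and> (\<forall>y. linear (\<lambda>x. br x y)) \<and>
     (\<forall>x y. br x y = - br y x) \<and>
     (\<forall>x y z. br x (br y z) + br y (br z x) + br z (br x y) = 0)"

definition tr :: "('g::euclidean_space \<Rightarrow> 'g) \<Rightarrow> real" where
  "tr f = (\<Sum>b\<in>Basis. f b \<bullet> b)"

definition killing :: "('g::euclidean_space \<Rightarrow> 'g \<Rightarrow> 'g) \<Rightarrow> 'g \<Rightarrow> 'g \<Rightarrow> real" where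
  "killing br x y = tr (\<lambda>z. br x (br y z))"

definition lie_ideal_in :: "('g::euclidean_space \<Rightarrow> 'g \<Rightarrow> 'g) \<Rightarrow> 'g set \<Rightarrow> 'g set \<Rightarrow> bool" where
  "lie_ideal_in br V I \<longleftrightarrow> subspace I \<and> I \<subseteq> V \<and> (\<forall>x\<in>V. \<forall>y\<in>I. br x y \<in> I)"

definition simple_on :: "('g::euclidean_space \<Rightarrow> 'g \<Rightarrow> 'g) \<Rightarrow> 'g set \<Rightarrow> bool" where
  "simple_on br V \<longleftrightarrow> subspace V \<and> (\<forall>x\<in>V. \<forall>y\<in>V. br x y \<in> V) \<and>
     (\<exists>x\<in>V. \<exists>y\<in>V. br x y \<noteq> 0) \<and>
     (\<forall>I. lie_ideal_in br V I \<longrightarrow> I = {0} \<or> I = V)"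

text \<open>Cartan decomposition g = k + p with p the B-orthogonal complement of k
  (Lie-algebra data of a maximal compact subgroup K of the non-compact simple group G).\<close>
definition pcomp :: "('g::euclidean_space \<Rightarrow> 'g \<Rightarrow> 'g) \<Rightarrow> 'g set \<Rightarrow> 'g set" where
  "pcomp br k = {X. \<forall>Y\<in>k. killing br X Y = 0}"

definition cartan_decomp :: "('g::euclidean_space \<Rightarrow> 'g \<Rightarrow> 'g) \<Rightarrow> 'g set \<Rightarrow> bool" where
  "cartan_decomp br k \<longleftrightarrow> subspace k \<and>
     (\<forall>x\<in>k. \<forall>y\<in>k. br x y \<in> k) \<and>
     (\<forall>X\<in>k. X \<noteq> 0 \<longrightarrow> killing br X X < 0) \<and>
     (\<forall>X\<in>pcomp br k. X \<noteq> 0 \<longrightarrow> killing br X X > 0) \<and>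
     (\<forall>x\<in>k. \<forall>y\<in>pcomp br k. br x y \<in> pcomp br k) \<and>
     (\<forall>x\<in>pcomp br k. \<forall>y\<in>pcomp br k. br x y \<in> k)"

definition projk :: "('g::euclidean_space \<Rightarrow> 'g \<Rightarrow> 'g) \<Rightarrow> 'g set \<Rightarrow> 'g \<Rightarrow> 'g" where
  "projk br k X = (THE a. a \<in> k \<and> X - a \<in> pcomp br k)"

definition projp :: "('g::euclidean_space \<Rightarrow> 'g \<Rightarrow> 'g) \<Rightarrow> 'g set \<Rightarrow> 'g \<Rightarrow> 'g" where
  "projp br k X = X - projk br k X"

text \<open>Killing form of the Lie algebra k: trace of ad_k x ad_k y on k, computed as the trace
  of (ad x ad y) composed with the projection onto k (equal to the trace on k).\<close>
definition killing_k :: "('g::euclidean_space \<Rightarrow> 'g \<Rightarrow> 'g) \<Rightarrow> 'g set \<Rightarrow> 'g \<Rightarrow> 'g \<Rightarrow> real" where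
  "killing_k br k x y = tr (\<lambda>z. br x (br y (projk br k z)))"

text \<open>Q = B|p - B|k; Q|_p and Q|_k extended by zero on the Q-orthogonal complement.\<close>
definition Qp :: "('g::euclidean_space \<Rightarrow> 'g \<Rightarrow> 'g) \<Rightarrow> 'g set \<Rightarrow> 'g \<Rightarrow> 'g \<Rightarrow> real" where
  "Qp br k X Y = killing br (projp br k X) (projp br k Y)"

definition Qk :: "('g::euclidean_space \<Rightarrow> 'g \<Rightarrow> 'g) \<Rightarrow> 'g set \<Rightarrow> 'g \<Rightarrow> 'g \<Rightarrow> real" where
  "Qk br k X Y = - killing br (projk br k X) (projk br k Y)"

text \<open>The set M_K of metrics beta Q|p + alpha_1 Q|k1 (Gordon's theorem).\<close>
definition MK :: "('g::euclidean_space \<Rightarrow> 'g \<Rightarrow> 'g) \<Rightarrow> 'g set \<Rightarrow> ('g \<Rightarrow> 'g \<Rightarrow> real) set" where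
  "MK br k = {g. \<exists>\<beta>>0. \<exists>\<alpha>>0. g = (\<lambda>X Y. \<beta> * Qp br k X Y + \<alpha> * Qk br k X Y)}"

text \<open>Levi-Civita connection, curvature and Ricci tensor of a left-invariant metric g,
  on left-invariant vector fields (Koszul formula).\<close>
definition lc :: "('g::euclidean_space \<Rightarrow> 'g \<Rightarrow> 'g) \<Rightarrow> ('g \<Rightarrow> 'g \<Rightarrow> real) \<Rightarrow> 'g \<Rightarrow> 'g \<Rightarrow> 'g" where
  "lc br g X Y = (THE U. \<forall>Z. 2 * g U Z = g (br X Y) Z - g (br Y Z) X + g (br Z X) Y)"

definition curv :: "('g::euclidean_space \<Rightarrow> 'g \<Rightarrow> 'g) \<Rightarrow> ('g \<Rightarrow> 'g \<Rightarrow> real) \<Rightarrow> 'g \<Rightarrow> 'g \<Rightarrow> 'g \<Rightarrow> 'g" where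
  "curv br g X Y Z = lc br g X (lc br g Y Z) - lc br g Y (lc br g X Z) - lc br g (br X Y) Z"

definition ric :: "('g::euclidean_space \<Rightarrow> 'g \<Rightarrow> 'g) \<Rightarrow> ('g \<Rightarrow> 'g \<Rightarrow> real) \<Rightarrow> 'g \<Rightarrow> 'g \<Rightarrow> real" where
  "ric br g Y Z = tr (\<lambda>X. curv br g X Y Z)"

definition sols :: "('g::euclidean_space \<Rightarrow> 'g \<Rightarrow> 'g) \<Rightarrow> 'g set \<Rightarrow> ('g \<Rightarrow> 'g \<Rightarrow> real)
     \<Rightarrow> (('g \<Rightarrow> 'g \<Rightarrow> real) \<times> real) set" where
  "sols br k T = {(g, c). g \<in> MK br k \<and> c > 0 \<and> ric br g = (\<lambda>X Y. c * T X Y)}"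

definition scal_rel :: "(('g \<Rightarrow> 'g \<Rightarrow> real) \<times> real) rel" where
  "scal_rel = {((g, c), (g', c')). \<exists>s>0. g' = (\<lambda>X Y. s * g X Y) \<and> c' = c}"

end

theory Submission
  imports Defs
begin

text \<open>For a metric \<open>\<beta> Q|p + \<alpha> Q|k\<close> the Koszul formula gives the Levi-Civita connection
  explicitly, \<open>\<nabla>\<^sub>X Y = [X,Y]/2 + (1+t)/2 ([X\<^sub>k,Y\<^sub>p] - [X\<^sub>p,Y\<^sub>k])\<close> with \<open>t = \<alpha>/\<beta>\<close>.
  Evaluating the Ricci trace block by block (maps exchanging \<open>k\<close> and \<open>p\<close> are traceless, and
  \<open>ad V\<close> composed with a projection is traceless for \<open>V \<in> k\<close> because \<open>k = [k,k]\<close>) gives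
  \<open>Ric = -(2+t)/4 B|p - (\<kappa>\<^sub>1 + (1-\<kappa>\<^sub>1) t\<^sup>2)/4 B|k\<close>. Hence \<open>Ric = c T\<close> exactly when
  \<open>c = (2+t)/(4 T\<^sub>p)\<close> and \<open>t > 0\<close> is a root of \<open>(1-\<kappa>\<^sub>1) T\<^sub>p t\<^sup>2 - T\<^sub>1 t + \<kappa>\<^sub>1 T\<^sub>p - 2 T\<^sub>1\<close>,
  and solutions up to scaling correspond to these roots. Computing a trace in \<open>B\<close>-dual bases of
  \<open>k\<close> and \<open>p\<close> yields the Casimir identity \<open>(1-\<kappa>\<^sub>1) d\<^sub>1 = n/2\<close>, which turns \<open>d\<^sub>1\<close> times the
  discriminant into \<open>d\<^sub>1 T\<^sub>1\<^sup>2 + 2n T\<^sub>p (2T\<^sub>1 - \<kappa>\<^sub>1 T\<^sub>p)\<close>; counting positive roots gives the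
  three cases.\<close>

lemma tr_add: "tr (\<lambda>x. f x + g x) = tr f + tr g"
  by (simp add: tr_def inner_add_left sum.distrib)

lemma tr_diff: "tr (\<lambda>x. f x - g x) = tr f - tr g"
  by (simp add: tr_def inner_diff_left sum_subtractf)

lemma tr_scale: "tr (\<lambda>x. c *\<^sub>R f x) = c * tr f"
  by (simp add: tr_def sum_distrib_left)

lemma tr_uminus: "tr (\<lambda>x. - f x) = - tr f"
  by (simp add: tr_def sum_negf)

lemma tr_zero: "tr (\<lambda>x. 0) = 0"
  by (simp add: tr_def)

lemma linear_eq_sum_Basis:
  fixes f :: "'a::euclidean_space \<Rightarrow> 'b::real_vector"
  assumes "linear f"
  shows "f y = (\<Sum>c\<in>Basis. (y \<bullet> c) *\<^sub>R f c)"
proof -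
  have "f y = f (\<Sum>c\<in>Basis. (y \<bullet> c) *\<^sub>R c)" by (simp add: euclidean_representation)
  also have "\<dots> = (\<Sum>c\<in>Basis. (y \<bullet> c) *\<^sub>R f c)"
    using assms by (simp add: linear_sum linear_scale)
  finally show ?thesis .
qed

lemma tr_compose_commute:
  fixes f g :: "'a::euclidean_space \<Rightarrow> 'a"
  assumes "linear f" "linear g"
  shows "tr (\<lambda>x. f (g x)) = tr (\<lambda>x. g (f x))"
proof -
  have "tr (\<lambda>x. f (g x)) = (\<Sum>b\<in>Basis. \<Sum>c\<in>Basis. (g b \<bullet> c) * (f c \<bullet> b))"
    unfolding tr_def by (subst linear_eq_sum_Basis[OF assms(1)]) (simp add: inner_sum_left)
  also have "\<dots> = (\<Sum>c\<in>Basis. \<Sum>b\<in>Basis. (f c \<bullet> b) * (g b \<bullet> c))"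
    by (subst sum.swap) (simp add: mult.commute)
  also have "\<dots> = tr (\<lambda>x. g (f x))"
    unfolding tr_def by (subst linear_eq_sum_Basis[OF assms(2)]) (simp add: inner_sum_left)
  finally show ?thesis .
qed

lemma tr_eq_sum_coordinates:
  fixes f :: "'a::euclidean_space \<Rightarrow> 'a"
  assumes "finite I" "finite J"
    and rep: "\<And>x. x = (\<Sum>i\<in>I. \<phi> i x *\<^sub>R e i) + (\<Sum>j\<in>J. \<psi> j x *\<^sub>R c j)"
    and "\<And>i. linear (\<phi> i)" "\<And>j. linear (\<psi> j)" and lf: "linear f"
  shows "tr f = (\<Sum>i\<in>I. \<phi> i (f (e i))) + (\<Sum>j\<in>J. \<psi> j (f (c j)))"
proof -
  have "tr f = (\<Sum>b\<in>Basis. f ((\<Sum>i\<in>I. \<phi> i b *\<^sub>R e i) + (\<Sum>j\<in>J. \<psi> j b *\<^sub>R c j)) \<bullet> b)"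
    unfolding tr_def using rep by metis
  also have "\<dots> = (\<Sum>b\<in>Basis. (\<Sum>i\<in>I. \<phi> i b * (f (e i) \<bullet> b)) + (\<Sum>j\<in>J. \<psi> j b * (f (c j) \<bullet> b)))"
    using lf by (simp add: linear_sum linear_scale linear_add inner_sum_left inner_add_left)
  also have "\<dots> = (\<Sum>i\<in>I. \<Sum>b\<in>Basis. \<phi> i b * (f (e i) \<bullet> b)) + (\<Sum>j\<in>J. \<Sum>b\<in>Basis. \<psi> j b * (f (c j) \<bullet> b))"
    by (simp add: sum.distrib sum.swap[of _ Basis])
  also have "\<dots> = (\<Sum>i\<in>I. \<phi> i (\<Sum>b\<in>Basis. (f (e i) \<bullet> b) *\<^sub>R b)) + (\<Sum>j\<in>J. \<psi> j (\<Sum>b\<in>Basis. (f (c j) \<bullet> b) *\<^sub>R b))"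
    using assms(4,5) by (simp add: linear_sum linear_scale mult.commute)
  also have "\<dots> = (\<Sum>i\<in>I. \<phi> i (f (e i))) + (\<Sum>j\<in>J. \<psi> j (f (c j)))"
    by (simp add: euclidean_representation)
  finally show ?thesis .
qed

lemma orthonormal_coeff:
  fixes U :: "'a::euclidean_space set"
  assumes "finite U" "pairwise orthogonal U" "\<And>u. u \<in> U \<Longrightarrow> norm u = 1" and v: "v \<in> U"
  shows "(\<Sum>u\<in>U. c u *\<^sub>R u) \<bullet> v = c v"
proof -
  have "(\<Sum>u\<in>U. c u *\<^sub>R u) \<bullet> v = (\<Sum>u\<in>U. if u = v then c v else 0)"
    unfolding inner_sum_left
    by (rule sum.cong[OF refl]) (use assms in \<open>auto simp: pairwise_def orthogonal_def norm_eq_1\<close>)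
  also have "\<dots> = c v" using assms(1) v by simp
  finally show ?thesis .
qed

lemma orthonormal_expansion:
  fixes U :: "'a::euclidean_space set"
  assumes onb: "finite U" "pairwise orthogonal U" "\<And>u. u \<in> U \<Longrightarrow> norm u = 1"
    and x: "x \<in> span U"
  shows "x = (\<Sum>u\<in>U. (x \<bullet> u) *\<^sub>R u)"
proof -
  define y where "y = x - (\<Sum>u\<in>U. (x \<bullet> u) *\<^sub>R u)"
  have yv: "y \<bullet> v = 0" if "v \<in> U" for v
    using orthonormal_coeff[OF onb that, of "\<lambda>u. x \<bullet> u"] unfolding y_def inner_diff_left by simp
  have yU: "y \<in> span U"
    unfolding y_def by (intro span_diff x span_sum span_scale span_base) auto
  have "orthogonal y y"
    using orthogonal_to_span[OF yU, of y] yv by (simp add: orthogonal_def)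
  then show ?thesis unfolding y_def by (simp add: orthogonal_def)
qed

lemma form_riesz_image_eq:
  fixes b :: "'a::euclidean_space \<Rightarrow> 'a \<Rightarrow> real"
  assumes lin: "\<And>x. linear (b x)" and sym: "\<And>x y. b x y = b y x"
    and S: "subspace S" and anisotropic: "\<And>x. x \<in> S \<Longrightarrow> x \<noteq> 0 \<Longrightarrow> b x x \<noteq> 0"
    and onb: "finite U" "pairwise orthogonal U" "\<And>u. u \<in> U \<Longrightarrow> norm u = 1" and spU: "span U = S"
  shows "(\<lambda>x. \<Sum>u\<in>U. b x u *\<^sub>R u) ` S = S"
proof -
  define M where "M x = (\<Sum>u\<in>U. b x u *\<^sub>R u)" for x
  have lin_l: "linear (\<lambda>x. b x y)" for y
  proof -
    have "(\<lambda>x. b x y) = b y" by (rule ext) (rule sym)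
    then show ?thesis using lin by simp
  qed
  have linM: "linear M"
    unfolding M_def by (rule linearI)
      (simp_all add: linear_add[OF lin_l] linear_scale[OF lin_l] scaleR_add_left sum.distrib scaleR_sum_right)
  have "M z \<bullet> v = b z v" if "v \<in> U" for z v
    unfolding M_def by (rule orthonormal_coeff[OF onb that])
  then have kerM: "b z w = 0" if "M z = 0" "w \<in> S" for z w
    using linear_eq_0_on_span[OF lin, of U z w] that spU by (metis inner_zero_left)
  have "inj_on M (span S)"
  proof (rule inj_onI)
    fix x y assume "x \<in> span S" "y \<in> span S" "M x = M y"
    then have xy: "x - y \<in> S" "M (x - y) = 0"
      using S by (simp_all add: subspace_diff span_eq_iff[THEN iffD2, OF S] linear_diff[OF linM])
    then have "b (x - y) (x - y) = 0" using kerM by blast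
    with anisotropic[OF xy(1)] have "x - y = 0" by blast
    then show "x = y" by simp
  qed
  then have "dim (M ` S) = dim S" using dim_image_eq[OF linM] by blast
  moreover have "M x \<in> S" for x
    unfolding M_def using spU span_superset by (intro subspace_sum[OF S] subspace_scale[OF S]) blast
  ultimately have "M ` S = S"
    by (intro subspace_dim_equal linear_subspace_image[OF linM S] S) auto
  then show ?thesis unfolding M_def .
qed

lemma dual_basis_exists:
  fixes b :: "'a::euclidean_space \<Rightarrow> 'a \<Rightarrow> real"
  assumes lin: "\<And>x. linear (b x)" and sym: "\<And>x y. b x y = b y x"
    and S: "subspace S" and anisotropic: "\<And>x. x \<in> S \<Longrightarrow> x \<noteq> 0 \<Longrightarrow> b x x \<noteq> 0"
  obtains U d where "finite U" "span U = S" "card U = dim S" "\<And>u. u \<in> U \<Longrightarrow> d u \<in> S"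
    "\<And>u v. u \<in> U \<Longrightarrow> v \<in> U \<Longrightarrow> b (d u) v = (if u = v then 1 else 0)"
    "\<And>x. x \<in> S \<Longrightarrow> x = (\<Sum>u\<in>U. b x (d u) *\<^sub>R u)"
proof -
  obtain U where US: "U \<subseteq> S" and orth: "pairwise orthogonal U" and nrm: "\<And>x. x \<in> U \<Longrightarrow> norm x = 1"
    and ind: "independent U" and cU: "card U = dim S" and spU: "span U = S"
    using orthonormal_basis_subspace[OF S] by blast
  have fin: "finite U" using ind by (rule finiteI_independent)
  note onb = fin orth nrm
  define M where "M x = (\<Sum>u\<in>U. b x u *\<^sub>R u)" for x
  have MSS: "M ` S = S"
    unfolding M_def by (rule form_riesz_image_eq[OF lin sym S anisotropic onb spU])
  define d where "d u = (SOME a. a \<in> S \<and> M a = u)" for u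
  have d: "d u \<in> S \<and> M (d u) = u" if "u \<in> U" for u
  proof -
    have "u \<in> M ` S" using that US MSS by auto
    then have "\<exists>a. a \<in> S \<and> M a = u" by auto
    then show ?thesis unfolding d_def by (rule someI_ex)
  qed
  have dual: "b (d u) v = (if u = v then 1 else 0)" if "u \<in> U" "v \<in> U" for u v
    using orthonormal_coeff[OF onb that(2), of "b (d u)"] d[OF that(1)] orth that nrm
    by (auto simp: M_def pairwise_def orthogonal_def norm_eq_1)
  have "x = (\<Sum>u\<in>U. b x (d u) *\<^sub>R u)" if x: "x \<in> S" for x
  proof -
    have xe: "x = (\<Sum>u\<in>U. (x \<bullet> u) *\<^sub>R u)" using orthonormal_expansion[OF onb] x spU by blast
    have "b x (d u) = x \<bullet> u" if u: "u \<in> U" for u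
    proof -
      have "b x (d u) = b (d u) x" by (rule sym)
      also have "\<dots> = b (d u) (\<Sum>v\<in>U. (x \<bullet> v) *\<^sub>R v)"
        using xe by (rule arg_cong)
      also have "\<dots> = (\<Sum>v\<in>U. (x \<bullet> v) * b (d u) v)"
        by (simp add: linear_sum[OF lin] linear_scale[OF lin])
      also have "\<dots> = (\<Sum>v\<in>U. if v = u then x \<bullet> u else 0)"
        by (rule sum.cong) (auto simp: dual u)
      also have "\<dots> = x \<bullet> u" using fin u by simp
      finally show ?thesis .
    qed
    then have "(\<Sum>u\<in>U. (x \<bullet> u) *\<^sub>R u) = (\<Sum>u\<in>U. b x (d u) *\<^sub>R u)"
      by (intro sum.cong) auto
    with xe show ?thesis by simp
  qed
  note expansion = this
  show thesis
    by (rule that[OF fin spU cU _ dual expansion]) (use d in blast)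
qed

lemma discriminant_nonneg_if_root:
  fixes a b c t :: real
  assumes "a*t^2 - b*t + c = 0"
  shows "b^2 - 4*a*c \<ge> 0"
proof -
  have "(2*a*t - b)^2 = 4*a*(a*t^2 - b*t + c) + b^2 - 4*a*c"
    by (simp add: power2_eq_square algebra_simps)
  then show ?thesis using assms by (metis add_0 mult_zero_right zero_le_power2 diff_ge_0_iff_ge le_diff_eq)
qed

lemma quadratic_roots:
  fixes a b c t :: real
  assumes a: "a > 0" and D: "b^2 - 4*a*c \<ge> 0"
  shows "a*t^2 - b*t + c = 0 \<longleftrightarrow>
    t = (b + sqrt (b^2 - 4*a*c))/(2*a) \<or> t = (b - sqrt (b^2 - 4*a*c))/(2*a)"
proof -
  define s where "s = sqrt (b^2 - 4*a*c)"
  have s2: "s^2 = b^2 - 4*a*c" unfolding s_def using D by simp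
  have "a * (t - (b + s)/(2*a)) * (t - (b - s)/(2*a)) = a*t^2 - b*t + (b^2 - s^2)/(4*a)"
    using a by (simp add: field_simps power2_eq_square)
  also have "(b^2 - s^2)/(4*a) = c" using a s2 by (simp add: field_simps)
  finally show ?thesis using a unfolding s_def by auto
qed

lemma card_pos_roots_eq_1:
  fixes a b c :: real
  assumes a: "a > 0" and b: "b > 0" and h: "b^2 - 4*a*c = 0 \<or> c \<le> 0"
  shows "card {t. t > 0 \<and> a*t^2 - b*t + c = 0} = 1"
proof -
  define s where "s = sqrt (b^2 - 4*a*c)"
  have D: "b^2 - 4*a*c \<ge> 0"
  proof (cases "c \<le> 0")
    case True
    then have "4*a*c \<le> 0" using a by (simp add: mult_nonneg_nonpos)
    then show ?thesis using zero_le_power2[of b] by linarith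
  qed (use h in simp)
  have "b \<le> s" if "c \<le> 0"
  proof -
    have "b^2 \<le> b^2 - 4*a*c" using a that by (simp add: mult_nonneg_nonpos)
    then show ?thesis unfolding s_def using b real_le_rsqrt by blast
  qed
  then have "(b - s)/(2*a) \<le> 0 \<or> s = 0"
    using h a unfolding s_def by (auto simp: divide_le_0_iff)
  moreover have "(b + s)/(2*a) > 0" using a b D unfolding s_def by (intro divide_pos_pos add_pos_nonneg) auto
  ultimately have "{t. t > 0 \<and> a*t^2 - b*t + c = 0} = {(b + s)/(2*a)}"
    using quadratic_roots[OF a D] unfolding s_def by auto
  then show ?thesis by simp
qed

lemma card_pos_roots_eq_2:
  fixes a b c :: real
  assumes a: "a > 0" and b: "b > 0" and D: "b^2 - 4*a*c > 0" and c: "c > 0"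
  shows "card {t. t > 0 \<and> a*t^2 - b*t + c = 0} = 2"
proof -
  define s where "s = sqrt (b^2 - 4*a*c)"
  have s0: "s > 0" unfolding s_def using D by simp
  have "b^2 - 4*a*c < b^2" using a c by simp
  then have "s < b" unfolding s_def using b by (metis real_less_lsqrt real_sqrt_less_iff abs_of_pos real_sqrt_abs)
  then have "(b - s)/(2*a) > 0" using a by simp
  moreover have "(b + s)/(2*a) > 0" using a b s0 by simp
  ultimately have "{t. t > 0 \<and> a*t^2 - b*t + c = 0} = {(b + s)/(2*a), (b - s)/(2*a)}"
    using quadratic_roots[OF a less_imp_le[OF D]] unfolding s_def by auto
  moreover have "(b + s)/(2*a) \<noteq> (b - s)/(2*a)" using a s0 by (simp add: divide_cancel_right)
  ultimately show ?thesis by simp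
qed

lemma equiv_scal_rel: "equiv UNIV scal_rel"
proof (rule equivI)
  show "refl scal_rel" unfolding refl_on_def scal_rel_def by (auto intro: exI[of _ 1])
  show "sym scal_rel"
  proof (rule symI)
    fix x y assume "(x, y) \<in> scal_rel"
    then obtain s where "s > 0" "fst y = (\<lambda>X Y. s * fst x X Y)" "snd y = snd x"
      unfolding scal_rel_def by auto
    then show "(y, x) \<in> scal_rel"
      unfolding scal_rel_def by (auto intro!: exI[of _ "1/s"] simp: prod_eq_iff)
  qed
  show "trans scal_rel"
  proof (rule transI)
    fix x y z assume "(x, y) \<in> scal_rel" "(y, z) \<in> scal_rel"
    then obtain s s' where "s > 0" "fst y = (\<lambda>X Y. s * fst x X Y)" "snd y = snd x"
      and "s' > 0" "fst z = (\<lambda>X Y. s' * fst y X Y)" "snd z = snd y"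
      unfolding scal_rel_def by auto
    then show "(x, z) \<in> scal_rel"
      unfolding scal_rel_def by (auto intro!: exI[of _ "s' * s"] simp: prod_eq_iff mult.assoc)
  qed
qed simp

lemma scaled_T_coefficients_iff:
  fixes Tp T1 \<kappa>1 t c :: real
  assumes "Tp > 0"
  shows "((2 + t)/4 = c * Tp \<and> (\<kappa>1 + (1 - \<kappa>1) * t^2)/4 = c * T1) \<longleftrightarrow>
         c = (2 + t)/(4*Tp) \<and> (1 - \<kappa>1)*Tp*t^2 - T1*t + (\<kappa>1*Tp - 2*T1) = 0"
proof -
  have "(2 + t)/4 = c * Tp \<longleftrightarrow> c = (2 + t)/(4*Tp)" using assms by (auto simp: field_simps)
  moreover have "(\<kappa>1 + (1 - \<kappa>1) * t^2)/4 = c * T1 \<longleftrightarrow> (1 - \<kappa>1)*Tp*t^2 - T1*t + (\<kappa>1*Tp - 2*T1) = 0"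
    if "c = (2 + t)/(4*Tp)"
    using assms unfolding that by (simp add: field_simps) (auto simp: algebra_simps)
  ultimately show ?thesis by blast
qed

lemma discriminant_via_casimir:
  fixes \<kappa>1 Tp T1 n d1 :: real
  assumes "(1 - \<kappa>1) * d1 = n / 2"
  shows "d1 * (T1^2 - 4 * ((1 - \<kappa>1) * Tp) * (\<kappa>1 * Tp - 2 * T1))
    = d1 * T1^2 + 2 * n * Tp * (2 * T1 - \<kappa>1 * Tp)"
proof -
  have n: "n = 2 * ((1 - \<kappa>1) * d1)" using assms by simp
  show ?thesis unfolding n by (simp add: algebra_simps power2_eq_square)
qed

locale cartan_pair =
  fixes br :: "'g::euclidean_space \<Rightarrow> 'g \<Rightarrow> 'g" and k :: "'g set"
  assumes lie: "lie_algebra br" and cartan: "cartan_decomp br k" and k_simple: "simple_on br k"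
begin

abbreviation "p \<equiv> pcomp br k"
abbreviation "B \<equiv> killing br"
abbreviation "Pk \<equiv> projk br k"
abbreviation "Pp \<equiv> projp br k"

lemma linear_br: "linear (br x)"
  using lie unfolding lie_algebra_def by blast

lemma linear_br_left: "linear (\<lambda>x. br x y)"
  using lie unfolding lie_algebra_def by blast

lemma br_skew: "br x y = - br y x"
  using lie unfolding lie_algebra_def by blast

lemmas br_linear_simps[simp] =
  linear_add[OF linear_br] linear_scale[OF linear_br] linear_0[OF linear_br]
  linear_neg[OF linear_br] linear_diff[OF linear_br]
  linear_add[OF linear_br_left] linear_scale[OF linear_br_left] linear_0[OF linear_br_left]
  linear_neg[OF linear_br_left] linear_diff[OF linear_br_left]

lemma br_br: "br (br x y) z = br x (br y z) - br y (br x z)"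
proof -
  have "br x (br y z) + br y (br z x) + br z (br x y) = 0"
    using lie unfolding lie_algebra_def by blast
  then have "br z (br x y) = - (br x (br y z) + br y (br z x))"
    by (metis add.commute add_eq_0_iff2 minus_unique)
  then have "br (br x y) z = br x (br y z) + br y (br z x)"
    using br_skew[of "br x y" z] by simp
  then show ?thesis using br_skew[of z x] by simp
qed

lemma br_br_swap: "br (br x y) z = br z (br y x)"
  by (metis br_skew br_linear_simps(4))

lemma killing_eq: "B x y = tr (\<lambda>z. br x (br y z))"
  by (simp add: killing_def)

lemma linear_killing: "linear (B x)"
  by (rule linearI) (simp_all add: killing_eq tr_add tr_scale)

lemma linear_killing_left: "linear (\<lambda>x. B x y)"
  by (rule linearI) (simp_all add: killing_eq tr_add tr_scale)

lemmas killing_linear_simps[simp] =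
  linear_add[OF linear_killing] linear_scale[OF linear_killing] linear_0[OF linear_killing]
  linear_neg[OF linear_killing] linear_diff[OF linear_killing]
  linear_add[OF linear_killing_left] linear_scale[OF linear_killing_left]
  linear_0[OF linear_killing_left] linear_neg[OF linear_killing_left]
  linear_diff[OF linear_killing_left]

lemma killing_sym: "B x y = B y x"
  unfolding killing_eq by (rule tr_compose_commute[OF linear_br linear_br])

lemma killing_invariant: "B (br x y) z = B x (br y z)"
proof -
  have "linear (\<lambda>w. br x (br z w))"
    using linear_compose[OF linear_br linear_br] by (simp add: o_def)
  then have "tr (\<lambda>w. br y (br x (br z w))) = tr (\<lambda>w. br x (br z (br y w)))"
    using tr_compose_commute[OF linear_br[of y]] by simp
  then show ?thesis
    unfolding killing_eq by (simp add: br_br tr_diff)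
qed

lemma killing_cyclic: "B (br x y) z = B (br y z) x"
  by (metis killing_invariant killing_sym)

lemma k_subspace: "subspace k"
  and br_k_k: "x \<in> k \<Longrightarrow> y \<in> k \<Longrightarrow> br x y \<in> k"
  and killing_neg_on_k: "x \<in> k \<Longrightarrow> x \<noteq> 0 \<Longrightarrow> B x x < 0"
  and killing_pos_on_p: "x \<in> p \<Longrightarrow> x \<noteq> 0 \<Longrightarrow> B x x > 0"
  and br_k_p: "x \<in> k \<Longrightarrow> y \<in> p \<Longrightarrow> br x y \<in> p"
  and br_p_p: "x \<in> p \<Longrightarrow> y \<in> p \<Longrightarrow> br x y \<in> k"
  using cartan by (simp_all add: cartan_decomp_def)

lemma mem_p_iff: "x \<in> p \<longleftrightarrow> (\<forall>y\<in>k. B x y = 0)"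
  by (simp add: pcomp_def)

lemma p_subspace: "subspace p"
  unfolding subspace_def by (auto simp: mem_p_iff)

lemma br_p_k: "x \<in> p \<Longrightarrow> y \<in> k \<Longrightarrow> br x y \<in> p"
  using br_k_p[of y x] br_skew[of x y] p_subspace by (simp add: subspace_neg)

lemma killing_p_k: "x \<in> p \<Longrightarrow> y \<in> k \<Longrightarrow> B x y = 0"
  and killing_k_p: "x \<in> k \<Longrightarrow> y \<in> p \<Longrightarrow> B x y = 0"
  by (simp_all add: mem_p_iff killing_sym[of x])

lemma k_inter_p: "x \<in> k \<Longrightarrow> x \<in> p \<Longrightarrow> x = 0"
  using killing_neg_on_k killing_pos_on_p by fastforce

lemmas k_p_closure[simp] =
  br_k_k br_k_p br_p_k br_p_p
  subspace_add[OF k_subspace] subspace_diff[OF k_subspace] subspace_scale[OF k_subspace]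
  subspace_neg[OF k_subspace] subspace_0[OF k_subspace]
  subspace_add[OF p_subspace] subspace_diff[OF p_subspace] subspace_scale[OF p_subspace]
  subspace_neg[OF p_subspace] subspace_0[OF p_subspace]

lemma k_p_decomposition: "\<exists>a\<in>k. X - a \<in> p"
proof -
  obtain U d where fin: "finite U" and spU: "span U = k" and "card U = dim k"
    and dk: "\<And>u. u \<in> U \<Longrightarrow> d u \<in> k"
    and dual: "\<And>u v. u \<in> U \<Longrightarrow> v \<in> U \<Longrightarrow> B (d u) v = (if u = v then 1 else 0)"
    and "\<And>x. x \<in> k \<Longrightarrow> x = (\<Sum>u\<in>U. B x (d u) *\<^sub>R u)"
    by (rule dual_basis_exists[OF linear_killing killing_sym k_subspace]) (auto dest: killing_neg_on_k)
  define a where "a = (\<Sum>u\<in>U. B X u *\<^sub>R d u)"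
  have "B (X - a) v = 0" if v: "v \<in> U" for v
  proof -
    have "B a v = (\<Sum>u\<in>U. B X u * B (d u) v)"
      unfolding a_def by (simp add: linear_sum[OF linear_killing_left])
    also have "\<dots> = (\<Sum>u\<in>U. if u = v then B X v else 0)"
      by (rule sum.cong) (auto simp: dual v)
    also have "\<dots> = B X v" using fin v by simp
    finally show ?thesis by simp
  qed
  then have "B (X - a) w = 0" if "w \<in> k" for w
    using linear_eq_0_on_span[OF linear_killing, of U "X - a" w] that spU by auto
  then have "X - a \<in> p" by (simp add: mem_p_iff del: killing_linear_simps)
  moreover have "a \<in> k"
    unfolding a_def using dk by (intro subspace_sum[OF k_subspace]) auto
  ultimately show ?thesis by blast
qed

lemma Pk_unique:
  assumes "a \<in> k" "X - a \<in> p"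
  shows "Pk X = a"
  unfolding projk_def
proof (rule the_equality)
  show "a \<in> k \<and> X - a \<in> p" using assms by simp
  fix b assume b: "b \<in> k \<and> X - b \<in> p"
  then have "b - a \<in> k" "b - a \<in> p"
    using assms subspace_diff[OF p_subspace, of "X - a" "X - b"] by auto
  then show "b = a" using k_inter_p by fastforce
qed

lemma Pk_mem[simp]: "Pk X \<in> k" and Pp_mem[simp]: "Pp X \<in> p"
proof -
  obtain a where "a \<in> k" "X - a \<in> p" using k_p_decomposition by blast
  moreover from this have "Pk X = a" by (rule Pk_unique)
  ultimately show "Pk X \<in> k" "Pp X \<in> p" by (auto simp: projp_def)
qed

lemma Pk_plus_Pp[simp]: "Pk X + Pp X = X"
  by (simp add: projp_def)

lemma Pk_k[simp]: "x \<in> k \<Longrightarrow> Pk x = x"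
  and Pk_p[simp]: "x \<in> p \<Longrightarrow> Pk x = 0"
  by (auto intro: Pk_unique)

lemma Pp_k[simp]: "x \<in> k \<Longrightarrow> Pp x = 0"
  and Pp_p[simp]: "x \<in> p \<Longrightarrow> Pp x = x"
  by (simp_all add: projp_def)

lemma linear_Pk: "linear Pk"
proof (rule linearI)
  show "Pk (x + y) = Pk x + Pk y" for x y
  proof (rule Pk_unique)
    have "x + y - (Pk x + Pk y) = Pp x + Pp y" by (simp add: projp_def)
    then show "x + y - (Pk x + Pk y) \<in> p" by simp
  qed simp
  show "Pk (c *\<^sub>R x) = c *\<^sub>R Pk x" for c x
  proof (rule Pk_unique)
    have "c *\<^sub>R x - c *\<^sub>R Pk x = c *\<^sub>R Pp x" by (simp add: projp_def scaleR_diff_right)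
    then show "c *\<^sub>R x - c *\<^sub>R Pk x \<in> p" by simp
  qed simp
qed

lemma linear_Pp: "linear Pp"
  unfolding projp_def by (intro linear_compose_sub linear_ident linear_Pk)

lemmas projection_linear_simps[simp] =
  linear_add[OF linear_Pk] linear_scale[OF linear_Pk] linear_0[OF linear_Pk]
  linear_neg[OF linear_Pk] linear_diff[OF linear_Pk]
  linear_add[OF linear_Pp] linear_scale[OF linear_Pp] linear_0[OF linear_Pp]
  linear_neg[OF linear_Pp] linear_diff[OF linear_Pp]

lemma tr_eq_0_if_swaps_k_p:
  assumes f: "linear f" and "\<And>x. x \<in> k \<Longrightarrow> f x \<in> p" "\<And>x. x \<in> p \<Longrightarrow> f x \<in> k"
  shows "tr f = 0"
proof -
  have lfk: "linear (\<lambda>x. f (Pk x))" and lfp: "linear (\<lambda>x. f (Pp x))"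
    using linear_compose[OF linear_Pk f] linear_compose[OF linear_Pp f] by (simp_all add: o_def)
  have "f x = Pp (f (Pk x)) + Pk (f (Pp x))" for x
    using assms(2,3) linear_add[OF f, of "Pk x" "Pp x"] by simp
  then have "f = (\<lambda>x. Pp (f (Pk x)) + Pk (f (Pp x)))" by (rule ext)
  then have "tr f = tr (\<lambda>x. Pp (f (Pk x)) + Pk (f (Pp x)))" by (rule arg_cong)
  also have "\<dots> = tr (\<lambda>x. Pp (f (Pk x))) + tr (\<lambda>x. Pk (f (Pp x)))" by (rule tr_add)
  also have "\<dots> = tr (\<lambda>x. f (Pk (Pp x))) + tr (\<lambda>x. f (Pp (Pk x)))"
    using tr_compose_commute[OF linear_Pp lfk] tr_compose_commute[OF linear_Pk lfp] by simp
  also have "\<dots> = 0"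
    using linear_0[OF f] by (simp add: tr_zero)
  finally show ?thesis .
qed

lemma k_eq_span_brackets: "k = span {br a b | a b. a \<in> k \<and> b \<in> k}"
proof -
  let ?I = "span {br a b | a b. a \<in> k \<and> b \<in> k}"
  have sub: "?I \<subseteq> k" by (rule span_minimal) (auto simp: k_subspace)
  have "lie_ideal_in br k ?I"
    unfolding lie_ideal_in_def
  proof (intro conjI ballI subspace_span sub)
    fix x y assume "x \<in> k" "y \<in> ?I"
    then show "br x y \<in> ?I" using sub by (intro span_base) blast
  qed
  moreover obtain x y where "x \<in> k" "y \<in> k" "br x y \<noteq> 0"
    using k_simple unfolding simple_on_def by blast
  then have "?I \<noteq> {0}" by (metis (mono_tags, lifting) mem_Collect_eq singletonD span_base)
  ultimately show ?thesis using k_simple unfolding simple_on_def by blast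
qed

text \<open>Since \<open>k\<close> is perfect, \<open>ad V\<close> for \<open>V \<in> k\<close> is a sum of commutators, and so is its
  composition with any map commuting with \<open>ad k\<close>.\<close>
lemma tr_ad_comp_eq_0:
  assumes Q: "linear Q" and comm: "\<And>a X. a \<in> k \<Longrightarrow> Q (br a X) = br a (Q X)" and V: "V \<in> k"
  shows "tr (\<lambda>X. br V (Q X)) = 0"
proof -
  have lin: "linear (\<lambda>V. tr (\<lambda>X. br V (Q X)))"
    by (rule linearI) (simp_all add: tr_add tr_scale)
  have "tr (\<lambda>X. br V (Q X)) = 0" if V: "V \<in> {br a b | a b. a \<in> k \<and> b \<in> k}" for V
  proof -
    obtain a b where ab: "V = br a b" "a \<in> k" "b \<in> k" using V by blast
    have "linear (\<lambda>X. br b (Q X))"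
      using linear_compose[OF Q linear_br] by (simp add: o_def)
    then have "tr (\<lambda>X. br a (br b (Q X))) = tr (\<lambda>X. br b (Q (br a X)))"
      using tr_compose_commute[OF linear_br] by simp
    also have "\<dots> = tr (\<lambda>X. br b (br a (Q X)))" using comm[OF ab(2)] by simp
    finally show ?thesis unfolding ab(1) br_br by (simp add: tr_diff)
  qed
  then show ?thesis
    using linear_eq_0_on_span[OF lin] V k_eq_span_brackets by blast
qed

lemma br_split: "br Y X = br Y (Pk X) + br Y (Pp X)"
proof -
  have "br Y X = br Y (Pk X + Pp X)" by simp
  also have "\<dots> = br Y (Pk X) + br Y (Pp X)" by (rule linear_add[OF linear_br])
  finally show ?thesis .
qed

lemma br_split_left: "br X Y = br (Pk X) Y + br (Pp X) Y"
proof -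
  have "br X Y = br (Pk X + Pp X) Y" by simp
  also have "\<dots> = br (Pk X) Y + br (Pp X) Y" by (rule linear_add[OF linear_br_left])
  finally show ?thesis .
qed

lemma Pk_br_k: "a \<in> k \<Longrightarrow> Pk (br a X) = br a (Pk X)"
  and Pk_br_p: "a \<in> p \<Longrightarrow> Pk (br a X) = br a (Pp X)"
  using br_split[of a X] by (auto intro!: Pk_unique)

lemma Pp_br_k: "a \<in> k \<Longrightarrow> Pp (br a X) = br a (Pp X)"
  using Pk_br_k br_split[of a X] by (simp add: projp_def)

lemma tr_ad_Pk: "V \<in> k \<Longrightarrow> tr (\<lambda>X. br V (Pk X)) = 0"
  and tr_ad_Pp: "V \<in> k \<Longrightarrow> tr (\<lambda>X. br V (Pp X)) = 0"
  by (rule tr_ad_comp_eq_0[OF linear_Pk Pk_br_k], assumption+)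
     (rule tr_ad_comp_eq_0[OF linear_Pp Pp_br_k], assumption+)

definition killing_p :: "'g \<Rightarrow> 'g \<Rightarrow> real" where
  "killing_p Y Z = tr (\<lambda>X. br Y (br Z (Pp X)))"

abbreviation "Bk \<equiv> killing_k br k"

lemma killing_split: "B Y Z = Bk Y Z + killing_p Y Z"
proof -
  have "br Y (br Z X) = br Y (br Z (Pk X)) + br Y (br Z (Pp X))" for X
    using br_split[of Z X] by simp
  then have "(\<lambda>X. br Y (br Z X)) = (\<lambda>X. br Y (br Z (Pk X)) + br Y (br Z (Pp X)))" by (rule ext)
  then have "B Y Z = tr (\<lambda>X. br Y (br Z (Pk X)) + br Y (br Z (Pp X)))"
    unfolding killing_eq by (rule arg_cong)
  also have "\<dots> = Bk Y Z + killing_p Y Z"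
    unfolding killing_k_def killing_p_def by (rule tr_add)
  finally show ?thesis .
qed

lemma killing_k_on_p: "Y \<in> p \<Longrightarrow> Z \<in> p \<Longrightarrow> Bk Y Z = B Y Z / 2"
  and killing_p_on_p: "Y \<in> p \<Longrightarrow> Z \<in> p \<Longrightarrow> killing_p Y Z = B Y Z / 2"
proof -
  assume Y: "Y \<in> p" and Z: "Z \<in> p"
  have "killing_p Y Z - killing_p Z Y = tr (\<lambda>X. br (br Y Z) (Pp X))"
    unfolding killing_p_def by (simp add: br_br tr_diff)
  also have "\<dots> = 0" using Y Z by (intro tr_ad_Pp) simp
  finally have sym: "killing_p Y Z = killing_p Z Y" by simp
  have "linear (\<lambda>X. br Z (Pk X))"
    using linear_compose[OF linear_Pk linear_br] by (simp add: o_def)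
  then have "Bk Y Z = tr (\<lambda>X. br Z (Pk (br Y X)))"
    unfolding killing_k_def using tr_compose_commute[OF linear_br] by simp
  also have "\<dots> = killing_p Z Y"
    unfolding killing_p_def using Y by (simp add: Pk_br_p)
  finally show "Bk Y Z = B Y Z / 2" "killing_p Y Z = B Y Z / 2"
    using killing_split[of Y Z] sym by auto
qed

text \<open>The prefix \<open>nr\<close> stands for naturally reductive: \<open>nr_metric \<beta> \<alpha>\<close> is \<open>\<beta> Q|p + \<alpha> Q|k\<close>
  (see \<open>MK_eq\<close>), and \<open>nr_conn t\<close> and \<open>nr_ric t\<close> are its Levi-Civita connection and Ricci
  tensor for \<open>t = \<alpha>/\<beta>\<close>.\<close>
definition nr_metric :: "real \<Rightarrow> real \<Rightarrow> 'g \<Rightarrow> 'g \<Rightarrow> real" where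
  "nr_metric \<beta> \<alpha> U V = \<beta> * B (Pp U) (Pp V) - \<alpha> * B (Pk U) (Pk V)"

lemma MK_eq: "MK br k = {nr_metric \<beta> \<alpha> | \<beta> \<alpha>. \<beta> > 0 \<and> \<alpha> > 0}"
proof -
  have "(\<lambda>X Y. \<beta> * Qp br k X Y + \<alpha> * Qk br k X Y) = nr_metric \<beta> \<alpha>" for \<beta> \<alpha>
    by (auto simp: nr_metric_def Qp_def Qk_def fun_eq_iff)
  then show ?thesis unfolding MK_def by auto
qed

lemma nr_metric_scale: "\<beta> > 0 \<Longrightarrow> nr_metric \<beta> \<alpha> = (\<lambda>X Y. \<beta> * nr_metric 1 (\<alpha>/\<beta>) X Y)"
  by (auto simp: nr_metric_def fun_eq_iff field_simps)

lemma nr_metric_pos: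
  assumes "\<beta> > 0" "\<alpha> > 0" "W \<noteq> 0"
  shows "nr_metric \<beta> \<alpha> W W > 0"
proof -
  have "Pp W \<noteq> 0 \<or> Pk W \<noteq> 0" using assms(3) Pk_plus_Pp[of W] by force
  then have "B (Pp W) (Pp W) > 0 \<or> B (Pk W) (Pk W) < 0"
    using killing_pos_on_p killing_neg_on_k by auto
  moreover have "B (Pp W) (Pp W) \<ge> 0" "B (Pk W) (Pk W) \<le> 0"
    using killing_pos_on_p[of "Pp W"] killing_neg_on_k[of "Pk W"] by (cases "Pp W = 0"; cases "Pk W = 0"; simp)+
  ultimately show ?thesis
    unfolding nr_metric_def using assms(1,2)
    by (smt (verit) mult_pos_pos mult_pos_neg mult_nonneg_nonneg mult_nonneg_nonpos)
qed

definition nr_conn :: "real \<Rightarrow> 'g \<Rightarrow> 'g \<Rightarrow> 'g" where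
  "nr_conn t X Y = (1/2) *\<^sub>R br X Y + ((1 + t)/2) *\<^sub>R (br (Pk X) (Pp Y) - br (Pp X) (Pk Y))"

lemma nr_conn_k_k[simp]: "X \<in> k \<Longrightarrow> Y \<in> k \<Longrightarrow> nr_conn t X Y = (1/2) *\<^sub>R br X Y"
  and nr_conn_p_p[simp]: "X \<in> p \<Longrightarrow> Y \<in> p \<Longrightarrow> nr_conn t X Y = (1/2) *\<^sub>R br X Y"
  by (simp_all add: nr_conn_def)

lemma nr_conn_k_p[simp]: "X \<in> k \<Longrightarrow> Y \<in> p \<Longrightarrow> nr_conn t X Y = (1 + t/2) *\<^sub>R br X Y"
  and nr_conn_p_k[simp]: "X \<in> p \<Longrightarrow> Y \<in> k \<Longrightarrow> nr_conn t X Y = (- t/2) *\<^sub>R br X Y"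
  by (simp_all add: nr_conn_def scaleR_left_distrib[symmetric] scaleR_left_diff_distrib[symmetric]
      add_divide_distrib diff_divide_distrib)

lemma linear_nr_conn: "linear (nr_conn t X)"
  by (rule linearI) (simp_all add: nr_conn_def algebra_simps)

lemma linear_nr_conn_left: "linear (\<lambda>X. nr_conn t X Y)"
  by (rule linearI) (simp_all add: nr_conn_def algebra_simps)

lemmas nr_conn_linear_simps[simp] =
  linear_add[OF linear_nr_conn] linear_scale[OF linear_nr_conn]
  linear_neg[OF linear_nr_conn] linear_diff[OF linear_nr_conn]
  linear_add[OF linear_nr_conn_left] linear_scale[OF linear_nr_conn_left]
  linear_neg[OF linear_nr_conn_left] linear_diff[OF linear_nr_conn_left]

lemma nr_conn_split: "nr_conn t X Z = nr_conn t (Pk X) Z + nr_conn t (Pp X) Z"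
proof -
  have "nr_conn t X Z = nr_conn t (Pk X + Pp X) Z" by simp
  also have "\<dots> = nr_conn t (Pk X) Z + nr_conn t (Pp X) Z" by (rule linear_add[OF linear_nr_conn_left])
  finally show ?thesis .
qed

text \<open>Of the Koszul terms only the four values \<open>a, b, c, d\<close> of \<open>B\<close> survive, by
  ad-invariance of \<open>B\<close> and \<open>B(k, p) = 0\<close>.\<close>
lemma koszul_components:
  assumes X1: "X1 \<in> k" and Y1: "Y1 \<in> k" and Z1: "Z1 \<in> k"
    and X2: "X2 \<in> p" and Y2: "Y2 \<in> p" and Z2: "Z2 \<in> p" and \<beta>: "\<beta> > 0"
  shows "2 * nr_metric \<beta> \<alpha> (nr_conn (\<alpha>/\<beta>) (X1+X2) (Y1+Y2)) (Z1+Z2)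
    = nr_metric \<beta> \<alpha> (br (X1+X2) (Y1+Y2)) (Z1+Z2) - nr_metric \<beta> \<alpha> (br (Y1+Y2) (Z1+Z2)) (X1+X2)
      + nr_metric \<beta> \<alpha> (br (Z1+Z2) (X1+X2)) (Y1+Y2)"
proof -
  define a where "a = B (br X1 Y2) Z2"
  define b where "b = B (br X2 Y1) Z2"
  define c where "c = B (br X1 Y1) Z1"
  define d where "d = B (br X2 Y2) Z1"
  have "B (br Y1 Z2) X2 = b" "B (br Z2 X2) Y1 = b"
    "B (br Y2 Z1) X2 = d" "B (br Z1 X2) Y2 = d"
    "B (br Y1 Z1) X1 = c" "B (br Z1 X1) Y1 = c"
    "B (br Y2 Z2) X1 = a" "B (br Z2 X1) Y2 = a"
    unfolding a_def b_def c_def d_def by (metis killing_cyclic)+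
  note abcd = this a_def[symmetric] b_def[symmetric] c_def[symmetric] d_def[symmetric]
  show ?thesis
    using X1 Y1 Z1 X2 Y2 Z2 \<beta>
    by (simp add: nr_metric_def nr_conn_def abcd killing_p_k killing_k_p algebra_simps)
      (simp add: field_simps)
qed

lemma koszul:
  "\<beta> > 0 \<Longrightarrow> 2 * nr_metric \<beta> \<alpha> (nr_conn (\<alpha>/\<beta>) X Y) Z
    = nr_metric \<beta> \<alpha> (br X Y) Z - nr_metric \<beta> \<alpha> (br Y Z) X + nr_metric \<beta> \<alpha> (br Z X) Y"
  using koszul_components[of "Pk X" "Pk Y" "Pk Z" "Pp X" "Pp Y" "Pp Z" \<beta> \<alpha>] by simp

lemma nr_metric_diff_left: "nr_metric \<beta> \<alpha> (U - V) W = nr_metric \<beta> \<alpha> U W - nr_metric \<beta> \<alpha> V W"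
  by (simp add: nr_metric_def algebra_simps)

lemma lc_nr_metric:
  assumes "\<beta> > 0" "\<alpha> > 0"
  shows "lc br (nr_metric \<beta> \<alpha>) X Y = nr_conn (\<alpha>/\<beta>) X Y"
  unfolding lc_def
proof (rule the_equality)
  show "\<forall>Z. 2 * nr_metric \<beta> \<alpha> (nr_conn (\<alpha>/\<beta>) X Y) Z = nr_metric \<beta> \<alpha> (br X Y) Z
      - nr_metric \<beta> \<alpha> (br Y Z) X + nr_metric \<beta> \<alpha> (br Z X) Y"
    using koszul[OF assms(1)] by blast
  fix U assume U: "\<forall>Z. 2 * nr_metric \<beta> \<alpha> U Z = nr_metric \<beta> \<alpha> (br X Y) Z
      - nr_metric \<beta> \<alpha> (br Y Z) X + nr_metric \<beta> \<alpha> (br Z X) Y"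
  have "2 * nr_metric \<beta> \<alpha> U Z = 2 * nr_metric \<beta> \<alpha> (nr_conn (\<alpha>/\<beta>) X Y) Z" for Z
    using U koszul[OF assms(1), of \<alpha> X Y Z] by simp
  then have "nr_metric \<beta> \<alpha> U Z = nr_metric \<beta> \<alpha> (nr_conn (\<alpha>/\<beta>) X Y) Z" for Z
    by simp
  then have "nr_metric \<beta> \<alpha> (U - nr_conn (\<alpha>/\<beta>) X Y) (U - nr_conn (\<alpha>/\<beta>) X Y) = 0"
    by (simp add: nr_metric_diff_left)
  then show "U = nr_conn (\<alpha>/\<beta>) X Y"
    using nr_metric_pos[OF assms] by (metis less_irrefl right_minus_eq)
qed

definition nr_ric :: "real \<Rightarrow> 'g \<Rightarrow> 'g \<Rightarrow> real" where
  "nr_ric t Y Z = tr (\<lambda>X. nr_conn t X (nr_conn t Y Z) - nr_conn t Y (nr_conn t X Z) - nr_conn t (br X Y) Z)"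

lemma ric_nr_metric: "\<beta> > 0 \<Longrightarrow> \<alpha> > 0 \<Longrightarrow> ric br (nr_metric \<beta> \<alpha>) Y Z = nr_ric (\<alpha>/\<beta>) Y Z"
  unfolding ric_def curv_def nr_ric_def by (simp add: lc_nr_metric)

lemma tr_nr_conn_left: "tr (\<lambda>X. nr_conn t X W) = 0"
proof -
  have "linear (\<lambda>X. nr_conn t X (Pp W))" by (rule linear_nr_conn_left)
  then have tr_p: "tr (\<lambda>X. nr_conn t X (Pp W)) = 0"
    by (rule tr_eq_0_if_swaps_k_p) simp_all
  have "nr_conn t X (Pk W) = (-1/2) *\<^sub>R br (Pk W) (Pk X) + (t/2) *\<^sub>R br (Pk W) (Pp X)" for X
    using nr_conn_split[of t X "Pk W"] br_skew[of "Pk X" "Pk W"] br_skew[of "Pp X" "Pk W"] by simp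
  then have "tr (\<lambda>X. nr_conn t X (Pk W)) = 0"
    by (simp add: tr_diff tr_scale tr_ad_Pk tr_ad_Pp)
  moreover have "nr_conn t X W = nr_conn t X (Pk W) + nr_conn t X (Pp W)" for X
    using linear_add[OF linear_nr_conn, of t X "Pk W" "Pp W"] by simp
  ultimately show ?thesis using tr_p by (simp add: tr_add)
qed

lemma nr_ric_eq:
  "nr_ric t Y Z = - tr (\<lambda>X. nr_conn t Y (nr_conn t X Z)) - tr (\<lambda>X. nr_conn t (br X Y) Z)"
  unfolding nr_ric_def tr_diff tr_nr_conn_left by simp

lemma nr_ric_mixed:
  assumes "Y \<in> k \<and> Z \<in> p \<or> Y \<in> p \<and> Z \<in> k"
  shows "nr_ric t Y Z = 0"
proof -
  have "linear (\<lambda>X. nr_conn t Y (nr_conn t X Z))"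
    using linear_compose[OF linear_nr_conn_left linear_nr_conn] by (simp add: o_def)
  then have "tr (\<lambda>X. nr_conn t Y (nr_conn t X Z)) = 0"
    by (rule tr_eq_0_if_swaps_k_p) (use assms in auto)
  moreover have "linear (\<lambda>X. nr_conn t (br X Y) Z)"
    using linear_compose[OF linear_br_left linear_nr_conn_left] by (simp add: o_def)
  then have "tr (\<lambda>X. nr_conn t (br X Y) Z) = 0"
    by (rule tr_eq_0_if_swaps_k_p) (use assms in auto)
  ultimately show ?thesis by (simp add: nr_ric_eq)
qed

lemma tr_killing_parts:
  "tr (\<lambda>X. a *\<^sub>R br Y (br Z (Pk X)) + b *\<^sub>R br Y (br Z (Pp X))) = a * Bk Y Z + b * killing_p Y Z"
  by (simp add: tr_add tr_scale killing_k_def killing_p_def)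

lemma nr_ric_k_k:
  assumes Y: "Y \<in> k" and Z: "Z \<in> k"
  shows "nr_ric t Y Z = (1/4) * Bk Y Z - (t/2 * (1 + t/2)) * killing_p Y Z
                       - (1/2) * Bk Z Y + (t/2) * killing_p Z Y"
proof -
  have "nr_conn t X Z = (-1/2) *\<^sub>R br Z (Pk X) + (t/2) *\<^sub>R br Z (Pp X)" for X
    unfolding nr_conn_split[of t X Z] using Z by (simp add: br_skew[of _ Z])
  then have "nr_conn t Y (nr_conn t X Z)
      = (-1/4) *\<^sub>R br Y (br Z (Pk X)) + (t/2 * (1 + t/2)) *\<^sub>R br Y (br Z (Pp X))" for X
    using Y Z by simp
  then have "tr (\<lambda>X. nr_conn t Y (nr_conn t X Z)) = (-1/4) * Bk Y Z + (t/2 * (1 + t/2)) * killing_p Y Z"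
    by (simp only: tr_killing_parts)
  moreover have "nr_conn t (br X Y) Z
      = (1/2) *\<^sub>R br Z (br Y (Pk X)) + (- t/2) *\<^sub>R br Z (br Y (Pp X))" for X
    unfolding br_split_left[of X Y] using Y Z by (simp add: br_br_swap)
  then have "tr (\<lambda>X. nr_conn t (br X Y) Z) = (1/2) * Bk Z Y + (- t/2) * killing_p Z Y"
    by (simp only: tr_killing_parts)
  ultimately show ?thesis
    by (simp add: nr_ric_eq)
qed

lemma nr_ric_p_p:
  assumes Y: "Y \<in> p" and Z: "Z \<in> p"
  shows "nr_ric t Y Z = (1/2 + t/4) * Bk Y Z - (t/4) * killing_p Y Z
                       - (1/2) * Bk Z Y - (1 + t/2) * killing_p Z Y"
proof -
  have "nr_conn t X Z = (- (1 + t/2)) *\<^sub>R br Z (Pk X) + (-1/2) *\<^sub>R br Z (Pp X)" for X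
    unfolding nr_conn_split[of t X Z] using Z by (simp add: br_skew[of _ Z] algebra_simps)
  then have "nr_conn t Y (nr_conn t X Z)
      = (- (1 + t/2) / 2) *\<^sub>R br Y (br Z (Pk X)) + (t/4) *\<^sub>R br Y (br Z (Pp X))" for X
    using Y Z by simp
  then have "tr (\<lambda>X. nr_conn t Y (nr_conn t X Z)) = (- (1 + t/2) / 2) * Bk Y Z + (t/4) * killing_p Y Z"
    by (simp only: tr_killing_parts)
  moreover have "nr_conn t (br X Y) Z
      = (1/2) *\<^sub>R br Z (br Y (Pk X)) + (1 + t/2) *\<^sub>R br Z (br Y (Pp X))" for X
    unfolding br_split_left[of X Y] using Y Z by (simp add: br_br_swap)
  then have "tr (\<lambda>X. nr_conn t (br X Y) Z) = (1/2) * Bk Z Y + (1 + t/2) * killing_p Z Y"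
    by (simp only: tr_killing_parts)
  ultimately show ?thesis
    by (simp add: nr_ric_eq field_simps)
qed

lemma nr_ric_add_left: "nr_ric t (Y1 + Y2) Z = nr_ric t Y1 Z + nr_ric t Y2 Z"
  and nr_ric_add_right: "nr_ric t Y (Z1 + Z2) = nr_ric t Y Z1 + nr_ric t Y Z2"
  by (simp_all add: nr_ric_eq tr_add)

lemma nr_ric_formula:
  assumes kappa: "\<forall>X\<in>k. \<forall>Y\<in>k. Bk X Y = \<kappa>1 * B X Y"
  shows "nr_ric t Y Z = - ((2 + t)/4) * B (Pp Y) (Pp Z) - ((\<kappa>1 + (1 - \<kappa>1) * t^2)/4) * B (Pk Y) (Pk Z)"
proof -
  have kk: "Bk a b = \<kappa>1 * B a b" "killing_p a b = (1 - \<kappa>1) * B a b" if "a \<in> k" "b \<in> k" for a b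
    using kappa that killing_split[of a b] by (auto simp: algebra_simps)
  have "nr_ric t Y Z = nr_ric t (Pk Y + Pp Y) (Pk Z + Pp Z)" by simp
  also have "\<dots> = nr_ric t (Pk Y) (Pk Z) + nr_ric t (Pp Y) (Pp Z)"
    by (simp only: nr_ric_add_left nr_ric_add_right) (simp add: nr_ric_mixed)
  also have "nr_ric t (Pk Y) (Pk Z) = - ((\<kappa>1 + (1 - \<kappa>1) * t^2)/4) * B (Pk Y) (Pk Z)"
    unfolding nr_ric_k_k[OF Pk_mem Pk_mem] kk[OF Pk_mem Pk_mem] killing_sym[of "Pk Z"]
    by (simp add: field_simps power2_eq_square)
  also have "nr_ric t (Pp Y) (Pp Z) = - ((2 + t)/4) * B (Pp Y) (Pp Z)"
    unfolding nr_ric_p_p[OF Pp_mem Pp_mem] killing_k_on_p[OF Pp_mem Pp_mem]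
      killing_p_on_p[OF Pp_mem Pp_mem] killing_sym[of "Pp Z"]
    by (simp add: field_simps)
  finally show ?thesis by simp
qed

context
  fixes U V :: "'g set" and d e :: "'g \<Rightarrow> 'g"
  assumes fin: "finite U" "finite V"
    and U_k: "U \<subseteq> k" and d_k: "\<And>u. u \<in> U \<Longrightarrow> d u \<in> k"
    and V_p: "V \<subseteq> p" and e_p: "\<And>v. v \<in> V \<Longrightarrow> e v \<in> p"
    and expand_k: "\<And>x. x \<in> k \<Longrightarrow> x = (\<Sum>u\<in>U. B x (d u) *\<^sub>R u)"
    and expand_p: "\<And>x. x \<in> p \<Longrightarrow> x = (\<Sum>v\<in>V. B x (e v) *\<^sub>R v)"
begin

lemma tr_dual_bases:
  assumes "linear f"
  shows "tr f = (\<Sum>u\<in>U. B (Pk (f u)) (d u)) + (\<Sum>v\<in>V. B (Pp (f v)) (e v))"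
proof (rule tr_eq_sum_coordinates[OF fin _ _ _ assms])
  show "x = (\<Sum>u\<in>U. B (Pk x) (d u) *\<^sub>R u) + (\<Sum>v\<in>V. B (Pp x) (e v) *\<^sub>R v)" for x
    using expand_k[of "Pk x"] expand_p[of "Pp x"] Pk_plus_Pp[of x] by simp
  show "linear (\<lambda>x. B (Pk x) (d u))" "linear (\<lambda>x. B (Pp x) (e v))" for u v
    by (rule linearI; simp)+
qed

lemma killing_p_dual_expansion:
  assumes "a \<in> k" "b \<in> k"
  shows "killing_p a b = (\<Sum>v\<in>V. B (br a (br b v)) (e v))"
proof -
  have "linear (\<lambda>X. br a (br b (Pp X)))"
    by (rule linearI) simp_all
  moreover have "(\<Sum>u\<in>U. B (Pk (br a (br b (Pp u)))) (d u)) = 0"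
    using U_k by (intro sum.neutral) auto
  moreover have "(\<Sum>v\<in>V. B (Pp (br a (br b (Pp v)))) (e v)) = (\<Sum>v\<in>V. B (br a (br b v)) (e v))"
    using V_p assms by (intro sum.cong) auto
  ultimately show ?thesis
    unfolding killing_p_def by (simp add: tr_dual_bases)
qed

lemma sum_dual_brackets_on_p:
  assumes v: "v \<in> p" and w: "w \<in> p"
  shows "(\<Sum>u\<in>U. B (br u (br (d u) v)) w) = B v w / 2"
proof -
  have "B (br u (br (d u) v)) w = - B (br v (br u w)) (d u)" for u
  proof -
    have "B (br u (br (d u) v)) w = - B (br (br (d u) v) u) w" by (subst br_skew) simp
    also have "\<dots> = - B (d u) (br v (br u w))" by (simp add: killing_invariant)
    finally show ?thesis by (simp add: killing_sym[of "d u"])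
  qed
  then have "(\<Sum>u\<in>U. B (br u (br (d u) v)) w) = - (\<Sum>u\<in>U. B (br v (br u w)) (d u))"
    by (simp add: sum_negf)
  also have "(\<Sum>u\<in>U. B (br v (br u w)) (d u)) = tr (\<lambda>X. br v (br (Pk X) w))"
  proof -
    have "linear (\<lambda>X. br v (br (Pk X) w))" by (rule linearI) simp_all
    moreover have "(\<Sum>u\<in>U. B (Pk (br v (br (Pk u) w))) (d u)) = (\<Sum>u\<in>U. B (br v (br u w)) (d u))"
      using U_k v w by (intro sum.cong) auto
    moreover have "(\<Sum>x\<in>V. B (Pp (br v (br (Pk x) w))) (e x)) = 0"
      using V_p by (intro sum.neutral) auto
    ultimately show ?thesis by (simp add: tr_dual_bases)
  qed
  also have "tr (\<lambda>X. br v (br (Pk X) w)) = - Bk v w"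
    unfolding killing_k_def by (subst br_skew[of "Pk _"]) (simp add: tr_uminus)
  finally show ?thesis using killing_k_on_p[OF v w] by simp
qed

end

text \<open>Summing \<open>killing_p u (d u)\<close> over a \<open>B\<close>-dual basis of \<open>k\<close> gives \<open>(1 - \<kappa>1) dim k\<close>; expanding
  the same trace over a dual basis of \<open>p\<close>, every basis vector of \<open>p\<close> contributes \<open>1/2\<close>.\<close>
lemma casimir_dim_identity:
  assumes kappa: "\<forall>X\<in>k. \<forall>Y\<in>k. Bk X Y = \<kappa>1 * B X Y"
  shows "(1 - \<kappa>1) * real (dim k) = real (dim p) / 2"
proof -
  obtain U d where finU: "finite U" and spU: "span U = k" and cU: "card U = dim k"
    and d_k: "\<And>u. u \<in> U \<Longrightarrow> d u \<in> k"
    and dual_U: "\<And>u v. u \<in> U \<Longrightarrow> v \<in> U \<Longrightarrow> B (d u) v = (if u = v then 1 else 0)"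
    and expand_k: "\<And>x. x \<in> k \<Longrightarrow> x = (\<Sum>u\<in>U. B x (d u) *\<^sub>R u)"
    by (rule dual_basis_exists[OF linear_killing killing_sym k_subspace]) (auto dest: killing_neg_on_k)
  obtain V e where finV: "finite V" and spV: "span V = p" and cV: "card V = dim p"
    and e_p: "\<And>v. v \<in> V \<Longrightarrow> e v \<in> p"
    and dual_V: "\<And>u v. u \<in> V \<Longrightarrow> v \<in> V \<Longrightarrow> B (e u) v = (if u = v then 1 else 0)"
    and expand_p: "\<And>x. x \<in> p \<Longrightarrow> x = (\<Sum>v\<in>V. B x (e v) *\<^sub>R v)"
    by (rule dual_basis_exists[OF linear_killing killing_sym p_subspace]) (auto dest: killing_pos_on_p)
  have U_k: "U \<subseteq> k" and V_p: "V \<subseteq> p" using spU spV span_superset by blast+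
  note bases = finU finV U_k d_k V_p e_p expand_k expand_p
  have "killing_p u (d u) = 1 - \<kappa>1" if u: "u \<in> U" for u
    using killing_split[of u "d u"] kappa U_k d_k[OF u] dual_U[OF u u] u
    by (auto simp: killing_sym[of u] algebra_simps)
  then have "(1 - \<kappa>1) * real (card U) = (\<Sum>u\<in>U. killing_p u (d u))" by simp
  also have "\<dots> = (\<Sum>u\<in>U. \<Sum>v\<in>V. B (br u (br (d u) v)) (e v))"
    using killing_p_dual_expansion[OF bases] U_k d_k by (auto intro!: sum.cong)
  also have "\<dots> = (\<Sum>v\<in>V. \<Sum>u\<in>U. B (br u (br (d u) v)) (e v))" by (rule sum.swap)
  also have "\<dots> = (\<Sum>v\<in>V. 1/2)"
  proof (rule sum.cong[OF refl])
    fix v assume v: "v \<in> V"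
    have "B v (e v) = 1" using dual_V[OF v v] killing_sym[of v "e v"] by simp
    then show "(\<Sum>u\<in>U. B (br u (br (d u) v)) (e v)) = 1/2"
      using sum_dual_brackets_on_p[OF bases, of v "e v"] V_p e_p v by auto
  qed
  finally show ?thesis using cU cV by simp
qed

lemma p_nonzero:
  assumes "\<exists>X. X \<noteq> 0 \<and> \<not> B X X < 0"
  shows "\<exists>e\<in>p. e \<noteq> 0"
proof -
  obtain X where "X \<noteq> 0" "\<not> B X X < 0" using assms by blast
  then have "X \<notin> k" using killing_neg_on_k by blast
  then have "Pp X \<noteq> 0" using Pk_plus_Pp[of X] Pk_mem[of X] by (metis add.right_neutral)
  then show ?thesis using Pp_mem by blast
qed

lemma k_nonzero: "\<exists>f\<in>k. f \<noteq> 0"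
  using k_simple unfolding simple_on_def by (metis br_linear_simps(8))

lemma killing_parts_eq_iff:
  assumes "\<exists>e\<in>p. e \<noteq> 0"
  shows "(\<lambda>X Y. a * B (Pp X) (Pp Y) + b * B (Pk X) (Pk Y)) = (\<lambda>X Y. a' * B (Pp X) (Pp Y) + b' * B (Pk X) (Pk Y))
    \<longleftrightarrow> a = a' \<and> b = b'"
proof
  assume eq: "(\<lambda>X Y. a * B (Pp X) (Pp Y) + b * B (Pk X) (Pk Y)) = (\<lambda>X Y. a' * B (Pp X) (Pp Y) + b' * B (Pk X) (Pk Y))"
  obtain e f where e: "e \<in> p" "e \<noteq> 0" and f: "f \<in> k" "f \<noteq> 0" using assms k_nonzero by blast
  have "a * B e e = a' * B e e" using fun_cong[OF fun_cong[OF eq, of e], of e] e by simp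
  moreover have "b * B f f = b' * B f f" using fun_cong[OF fun_cong[OF eq, of f], of f] f by simp
  ultimately show "a = a' \<and> b = b'"
    using killing_pos_on_p[OF e] killing_neg_on_k[OF f] by simp
qed simp

lemma ric_nr_metric_eq_scaled_T_iff:
  assumes kappa: "\<forall>X\<in>k. \<forall>Y\<in>k. Bk X Y = \<kappa>1 * B X Y" and p: "\<exists>e\<in>p. e \<noteq> 0"
    and "Tp > 0" "\<beta> > 0" "\<alpha> > 0"
  shows "ric br (nr_metric \<beta> \<alpha>) = (\<lambda>X Y. c * (- Tp * Qp br k X Y + T1 * Qk br k X Y))
     \<longleftrightarrow> c = (2 + \<alpha>/\<beta>)/(4*Tp) \<and> (1 - \<kappa>1)*Tp*(\<alpha>/\<beta>)^2 - T1*(\<alpha>/\<beta>) + (\<kappa>1*Tp - 2*T1) = 0"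
proof -
  have R: "ric br (nr_metric \<beta> \<alpha>) = (\<lambda>X Y. (- ((2 + \<alpha>/\<beta>)/4)) * B (Pp X) (Pp Y)
      + (- ((\<kappa>1 + (1 - \<kappa>1) * (\<alpha>/\<beta>)^2)/4)) * B (Pk X) (Pk Y))"
    using assms(4,5) by (simp add: fun_eq_iff ric_nr_metric nr_ric_formula[OF kappa])
  have T: "(\<lambda>X Y. c * (- Tp * Qp br k X Y + T1 * Qk br k X Y))
      = (\<lambda>X Y. (- (c * Tp)) * B (Pp X) (Pp Y) + (- (c * T1)) * B (Pk X) (Pk Y))"
    by (simp add: fun_eq_iff Qp_def Qk_def algebra_simps)
  show ?thesis
    unfolding R T killing_parts_eq_iff[OF p] neg_equal_iff_equal by (rule scaled_T_coefficients_iff[OF assms(3)])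
qed

lemma card_sols_quotient:
  assumes kappa: "\<forall>X\<in>k. \<forall>Y\<in>k. Bk X Y = \<kappa>1 * B X Y" and p: "\<exists>e\<in>p. e \<noteq> 0" and Tp: "Tp > 0"
  shows "card (sols br k (\<lambda>X Y. - Tp * Qp br k X Y + T1 * Qk br k X Y) // scal_rel)
    = card {t. t > 0 \<and> (1 - \<kappa>1)*Tp*t^2 - T1*t + (\<kappa>1*Tp - 2*T1) = 0}"
    (is "card (sols br k ?T // scal_rel) = _")
proof -
  define T where "T = ?T"
  define R where "R = {t. t > 0 \<and> (1 - \<kappa>1)*Tp*t^2 - T1*t + (\<kappa>1*Tp - 2*T1) = 0}"
  define cls where "cls t = scal_rel `` {(nr_metric 1 t, (2 + t)/(4*Tp))}" for t
  have sol_iff: "ric br (nr_metric \<beta> \<alpha>) = (\<lambda>X Y. c * T X Y) \<longleftrightarrow>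
      c = (2 + \<alpha>/\<beta>)/(4*Tp) \<and> (1 - \<kappa>1)*Tp*(\<alpha>/\<beta>)^2 - T1*(\<alpha>/\<beta>) + (\<kappa>1*Tp - 2*T1) = 0"
    if "\<beta> > 0" "\<alpha> > 0" for \<beta> \<alpha> c
    unfolding T_def by (rule ric_nr_metric_eq_scaled_T_iff[OF kappa p Tp that])
  have "sols br k T // scal_rel = cls ` R"
  proof (rule set_eqI)
    fix Z
    show "Z \<in> sols br k T // scal_rel \<longleftrightarrow> Z \<in> cls ` R"
    proof
      assume "Z \<in> sols br k T // scal_rel"
      then obtain x where x: "x \<in> sols br k T" and Z: "Z = scal_rel `` {x}" by (rule quotientE)
      obtain g c where x_eq: "x = (g, c)" by (cases x)
      have "g \<in> MK br k" and ric: "ric br g = (\<lambda>X Y. c * T X Y)"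
        using x unfolding x_eq sols_def by simp_all
      then obtain \<beta> \<alpha> where ba: "\<beta> > 0" "\<alpha> > 0" and g: "g = nr_metric \<beta> \<alpha>"
        unfolding MK_eq by blast
      have c: "c = (2 + \<alpha>/\<beta>)/(4*Tp)"
        and root: "(1 - \<kappa>1)*Tp*(\<alpha>/\<beta>)^2 - T1*(\<alpha>/\<beta>) + (\<kappa>1*Tp - 2*T1) = 0"
        using sol_iff[OF ba, of c] ric unfolding g by blast+
      have rel: "((nr_metric 1 (\<alpha>/\<beta>), c), x) \<in> scal_rel"
        unfolding scal_rel_def x_eq g nr_metric_scale[OF ba(1)] using ba(1) by (auto intro!: exI[of _ \<beta>])
      have "Z = scal_rel `` {(nr_metric 1 (\<alpha>/\<beta>), c)}"
        unfolding Z using equiv_class_eq[OF equiv_scal_rel rel] by simp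
      then have "Z = cls (\<alpha>/\<beta>)" unfolding cls_def c .
      moreover have "\<alpha>/\<beta> \<in> R" using root ba unfolding R_def by auto
      ultimately show "Z \<in> cls ` R" by blast
    next
      assume "Z \<in> cls ` R"
      then obtain t where t: "t > 0" "(1 - \<kappa>1)*Tp*t^2 - T1*t + (\<kappa>1*Tp - 2*T1) = 0" and Z: "Z = cls t"
        unfolding R_def by blast
      have "ric br (nr_metric 1 t) = (\<lambda>X Y. ((2 + t)/(4*Tp)) * T X Y)"
        using sol_iff[of 1 t "(2 + t)/(4*Tp)"] t by simp
      moreover have "nr_metric 1 t \<in> MK br k"
        unfolding MK_eq using t(1) by (intro CollectI exI[of _ 1] exI[of _ t]) simp
      ultimately have "(nr_metric 1 t, (2 + t)/(4*Tp)) \<in> sols br k T"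
        using t Tp unfolding sols_def by simp
      then show "Z \<in> sols br k T // scal_rel" unfolding Z cls_def quotient_def by blast
    qed
  qed
  moreover have "inj_on cls R"
  proof (rule inj_onI)
    fix t1 t2 assume "cls t1 = cls t2"
    then have "((nr_metric 1 t1, (2 + t1)/(4*Tp)), (nr_metric 1 t2, (2 + t2)/(4*Tp))) \<in> scal_rel"
      unfolding cls_def by (rule eq_equiv_class[OF _ equiv_scal_rel UNIV_I])
    then show "t1 = t2" using Tp by (auto simp: scal_rel_def)
  qed
  ultimately show ?thesis unfolding R_def T_def by (simp add: card_image)
qed

lemma root_if_ric_eq_scaled_T:
  assumes kappa: "\<forall>X\<in>k. \<forall>Y\<in>k. Bk X Y = \<kappa>1 * B X Y" and p: "\<exists>e\<in>p. e \<noteq> 0" and Tp: "Tp > 0"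
    and "g \<in> MK br k" "ric br g = (\<lambda>X Y. c * (- Tp * Qp br k X Y + T1 * Qk br k X Y))"
  shows "\<exists>t>0. (1 - \<kappa>1)*Tp*t^2 - T1*t + (\<kappa>1*Tp - 2*T1) = 0"
proof -
  obtain \<beta> \<alpha> where ba: "\<beta> > 0" "\<alpha> > 0" and "g = nr_metric \<beta> \<alpha>"
    using assms(4) unfolding MK_eq by blast
  then have "(1 - \<kappa>1)*Tp*(\<alpha>/\<beta>)^2 - T1*(\<alpha>/\<beta>) + (\<kappa>1*Tp - 2*T1) = 0"
    using assms(5) ric_nr_metric_eq_scaled_T_iff[OF kappa p Tp ba] by blast
  then show ?thesis using ba by (intro exI[of _ "\<alpha>/\<beta>"]) simp
qed

lemma dim_k_pos: "dim k > 0"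
  using k_nonzero dim_eq_0 by fastforce

lemma dim_p_pos: "\<exists>e\<in>p. e \<noteq> 0 \<Longrightarrow> dim p > 0"
  using dim_eq_0 by fastforce

lemma kappa_lt_1:
  assumes kappa: "\<forall>X\<in>k. \<forall>Y\<in>k. Bk X Y = \<kappa>1 * B X Y" and p: "\<exists>e\<in>p. e \<noteq> 0"
  shows "\<kappa>1 < 1"
proof -
  have "(1 - \<kappa>1) * real (dim k) > 0"
    using casimir_dim_identity[OF kappa] dim_p_pos[OF p] by simp
  then show ?thesis using dim_k_pos by (simp add: zero_less_mult_iff)
qed

end

theorem proposition6p1:
  fixes br :: "'g::euclidean_space \<Rightarrow> 'g \<Rightarrow> 'g"
    and k :: "'g set"
    and \<kappa>1 Tp T1 :: real
  assumes lie: "lie_algebra br"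
    and simple: "simple_on br UNIV"
    and noncompact: "\<exists>X. X \<noteq> 0 \<and> \<not> killing br X X < 0"
    and cartan: "cartan_decomp br k"
    and k_simple: "simple_on br k"
    and kappa: "\<forall>X\<in>k. \<forall>Y\<in>k. killing_k br k X Y = \<kappa>1 * killing br X Y"
    and Tp_pos: "Tp > 0" and T1_pos: "T1 > 0"
  defines "n \<equiv> real (dim (pcomp br k))"
    and "d1 \<equiv> real (dim k)"
    and "T \<equiv> (\<lambda>X Y. - Tp * Qp br k X Y + T1 * Qk br k X Y)"
  shows
    "(2 * n * Tp * (2 * T1 - \<kappa>1 * Tp) < - d1 * T1^2 \<longrightarrow>
        \<not> (\<exists>g\<in>MK br k. \<exists>c::real. ric br g = (\<lambda>X Y. c * T X Y)))
   \<and> ((2 * n * Tp * (2 * T1 - \<kappa>1 * Tp) = - d1 * T1^2 \<or> 2 * T1 - \<kappa>1 * Tp \<ge> 0) \<longrightarrow>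
        card (sols br k T // scal_rel) = 1)
   \<and> ((- d1 * T1^2 < 2 * n * Tp * (2 * T1 - \<kappa>1 * Tp) \<and> 2 * n * Tp * (2 * T1 - \<kappa>1 * Tp) < 0) \<longrightarrow>
        card (sols br k T // scal_rel) = 2)"
proof -
  interpret cartan_pair br k using lie cartan k_simple by unfold_locales
  have p: "\<exists>e\<in>pcomp br k. e \<noteq> 0" by (rule p_nonzero[OF noncompact])
  define A where "A = (1 - \<kappa>1) * Tp"
  define C where "C = \<kappa>1 * Tp - 2 * T1"
  have A: "A > 0" unfolding A_def using kappa_lt_1[OF kappa p] Tp_pos by simp
  have d1: "d1 > 0" and n: "n > 0" unfolding d1_def n_def using dim_k_pos dim_p_pos[OF p] by simp_all
  have disc: "d1 * (T1^2 - 4*A*C) = d1 * T1^2 + 2 * n * Tp * (2 * T1 - \<kappa>1 * Tp)"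
    unfolding A_def C_def n_def d1_def by (rule discriminant_via_casimir[OF casimir_dim_identity[OF kappa]])
  have card: "card (sols br k T // scal_rel) = card {t. t > 0 \<and> A*t^2 - T1*t + C = 0}"
    unfolding T_def A_def C_def by (rule card_sols_quotient[OF kappa p Tp_pos])
  show ?thesis
  proof (intro conjI impI notI)
    assume H: "2 * n * Tp * (2 * T1 - \<kappa>1 * Tp) < - d1 * T1^2"
      and "\<exists>g\<in>MK br k. \<exists>c. ric br g = (\<lambda>X Y. c * T X Y)"
    then obtain t where "A*t^2 - T1*t + C = 0"
      using root_if_ric_eq_scaled_T[OF kappa p Tp_pos] unfolding T_def A_def C_def by blast
    then have "T1^2 - 4*A*C \<ge> 0" by (rule discriminant_nonneg_if_root)
    then have "d1 * (T1^2 - 4*A*C) \<ge> 0" using d1 by simp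
    then show False using H disc by linarith
  next
    assume H: "2 * n * Tp * (2 * T1 - \<kappa>1 * Tp) = - d1 * T1^2 \<or> 2 * T1 - \<kappa>1 * Tp \<ge> 0"
    have "T1^2 - 4*A*C = 0 \<or> C \<le> 0"
    proof (cases "2 * T1 - \<kappa>1 * Tp \<ge> 0")
      case False
      then have "d1 * (T1^2 - 4*A*C) = 0" using H disc by simp
      then show ?thesis using d1 by simp
    qed (simp add: C_def)
    then show "card (sols br k T // scal_rel) = 1"
      unfolding card by (rule card_pos_roots_eq_1[OF A T1_pos])
  next
    assume H: "- d1 * T1^2 < 2 * n * Tp * (2 * T1 - \<kappa>1 * Tp) \<and> 2 * n * Tp * (2 * T1 - \<kappa>1 * Tp) < 0"
    then have "d1 * (T1^2 - 4*A*C) > 0" using disc by linarith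
    then have "T1^2 - 4*A*C > 0" using d1 by (simp add: zero_less_mult_iff)
    moreover have "C > 0" using H n Tp_pos unfolding C_def by (simp add: mult_less_0_iff)
    ultimately show "card (sols br k T // scal_rel) = 2"
      unfolding card by (rule card_pos_roots_eq_2[OF A T1_pos])
  qed
qed

end
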